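(* Let $G=(V,E,(p_{uv})_{(u,v)\in E})$ be an influence graph. For every $S\subseteq V$, $\sigma^2(S)\le 2\,\sigma(S)$.
   Context: $G$ is a directed graph with activation probabilities $p_{uv}\in[0,1]$. $\mathbf L$ and $\hat{\mathbf L}$ are independent random subsets of $E$, each containing every edge $(u,v)$ independently with probability $p_{uv}$ (live-edge graphs). For $L\subseteq E$ and $S\subseteq V$, $\sigma_L(S)$ is the number of nodes reachable by a directed path (of length $\ge0$) in $(V,L)$ from some node of $S$, and $\sigma(S):=\mathbb{E}[\sigma_{\mathbf L}(S)]$. For $S\subseteq V$, the 2-level live-edge graph is $\mathbf L^2(S):=\mathbf L\cup(\hat{\mathbf L}\cap\{(u,v)\in E:u\in S\})$, and $\sigma^2(S):=\mathbb{E}_{\mathbf L,\hat{\mathbf L}}[\sigma_{\mathbf L^2(S)}(S)]$. *)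

theory Defs
  imports Complex_Main
begin

definition influence_graph :: "'a set \<Rightarrow> ('a \<times> 'a) set \<Rightarrow> ('a \<times> 'a \<Rightarrow> real) \<Rightarrow> bool" where
  "influence_graph V E p \<longleftrightarrow> finite V \<and> E \<subseteq> V \<times> V \<and> (\<forall>e\<in>E. 0 \<le> p e \<and> p e \<le> 1)"

text \<open>Probability that the random live-edge graph equals L (each edge e \<in> E
independently included with probability p e).\<close>
definition live_prob :: "('a \<times> 'a) set \<Rightarrow> ('a \<times> 'a \<Rightarrow> real) \<Rightarrow> ('a \<times> 'a) set \<Rightarrow> real" where
  "live_prob E p L = (\<Prod>e\<in>L. p e) * (\<Prod>e\<in>E - L. 1 - p e)"

definition reach_count :: "'a set \<Rightarrow> ('a \<times> 'a) set \<Rightarrow> 'a set \<Rightarrow> nat" where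
  "reach_count V L S = card {v \<in> V. \<exists>s\<in>S. (s, v) \<in> L\<^sup>*}"

definition sigma :: "'a set \<Rightarrow> ('a \<times> 'a) set \<Rightarrow> ('a \<times> 'a \<Rightarrow> real) \<Rightarrow> 'a set \<Rightarrow> real" where
  "sigma V E p S = (\<Sum>L\<in>Pow E. live_prob E p L * real (reach_count V L S))"

definition two_level :: "('a \<times> 'a) set \<Rightarrow> 'a set \<Rightarrow> ('a \<times> 'a) set \<Rightarrow> ('a \<times> 'a) set \<Rightarrow> ('a \<times> 'a) set" where
  "two_level E S L L' = L \<union> (L' \<inter> {(u, v) \<in> E. u \<in> S})"

definition sigma2 :: "'a set \<Rightarrow> ('a \<times> 'a) set \<Rightarrow> ('a \<times> 'a \<Rightarrow> real) \<Rightarrow> 'a set \<Rightarrow> real" where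
  "sigma2 V E p S = (\<Sum>L\<in>Pow E. \<Sum>L'\<in>Pow E.
      live_prob E p L * live_prob E p L' * real (reach_count V (two_level E S L L') S))"

end

theory Submission
  imports Defs
begin

text \<open>A node reached from S in the 2-level graph is reached either in L, or in the graph that
takes the out-edges of S from L' and all other edges from L: look at the last edge of the path
that leaves S. Exchanging the out-edges of S between L and L' is a measure-preserving involution
on pairs of live-edge graphs, so that second graph is again distributed like a live-edge graph
and its expected reach is \<sigma>(S) as well.\<close>

definition resample :: "('a \<times> 'a) set \<Rightarrow> ('a \<times> 'a) set \<Rightarrow> ('a \<times> 'a) set \<Rightarrow> ('a \<times> 'a) set" where
  "resample F L L' = (L - F) \<union> (L' \<inter> F)"

lemma resample_resample: "resample F (resample F L L') (resample F L' L) = L"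
  unfolding resample_def by blast

lemma resample_subset: "L \<subseteq> E \<Longrightarrow> L' \<subseteq> E \<Longrightarrow> resample F L L' \<subseteq> E"
  unfolding resample_def by blast

lemma live_prob_nonneg:
  assumes "\<forall>e\<in>E. 0 \<le> p e \<and> p e \<le> 1" and "L \<subseteq> E"
  shows "0 \<le> live_prob E p L"
  unfolding live_prob_def using assms by (intro mult_nonneg_nonneg prod_nonneg) auto

lemma sum_live_prob_eq_1:
  assumes "finite E"
  shows "(\<Sum>L\<in>Pow E. live_prob E p L) = 1"
proof -
  have "(\<Sum>L\<in>Pow E. live_prob E p L) = (\<Prod>e\<in>E. p e + (1 - p e))"
    unfolding live_prob_def by (rule prod_add[OF assms, symmetric])
  then show ?thesis by simp
qed

lemma live_prob_eq_prod:
  assumes "finite E" and "L \<subseteq> E"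
  shows "live_prob E p L = (\<Prod>e\<in>E. if e \<in> L then p e else 1 - p e)"
proof -
  have "E \<inter> {e. e \<in> L} = L" and "E \<inter> - {e. e \<in> L} = E - L"
    using assms(2) by auto
  then show ?thesis
    unfolding live_prob_def prod.If_cases[OF assms(1)] by simp
qed

lemma live_prob_resample:
  assumes "finite E" and "L \<subseteq> E" and "L' \<subseteq> E"
  shows "live_prob E p (resample F L L') * live_prob E p (resample F L' L)
       = live_prob E p L * live_prob E p L'"
  unfolding live_prob_eq_prod[OF assms(1) resample_subset[OF assms(2,3)]]
    live_prob_eq_prod[OF assms(1) resample_subset[OF assms(3,2)]]
    live_prob_eq_prod[OF assms(1,2)] live_prob_eq_prod[OF assms(1,3)] prod.distrib[symmetric]
  by (rule prod.cong) (auto simp: resample_def)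

lemma sum_live_prob_pair_fst:
  assumes "finite E"
  shows "(\<Sum>L\<in>Pow E. \<Sum>L'\<in>Pow E. live_prob E p L * live_prob E p L' * f L)
       = (\<Sum>L\<in>Pow E. live_prob E p L * f L)"
  by (simp add: mult.commute mult.left_commute sum_distrib_left[symmetric]
      sum_live_prob_eq_1[OF assms])

lemma sum_live_prob_resample:
  assumes "finite E"
  shows "(\<Sum>L\<in>Pow E. \<Sum>L'\<in>Pow E. live_prob E p L * live_prob E p L' * f (resample F L L'))
       = (\<Sum>L\<in>Pow E. live_prob E p L * f L)"
proof -
  let ?P = "live_prob E p"
  let ?swap = "\<lambda>(L, L'). (resample F L L', resample F L' L)"
  have "(\<Sum>L\<in>Pow E. \<Sum>L'\<in>Pow E. ?P L * ?P L' * f (resample F L L'))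
      = (\<Sum>(L, L')\<in>Pow E \<times> Pow E. ?P L * ?P L' * f (resample F L L'))"
    by (rule sum.cartesian_product)
  also have "\<dots> = (\<Sum>(L, L')\<in>Pow E \<times> Pow E. ?P L * ?P L' * f L)"
    by (rule sum.reindex_bij_witness[where i = ?swap and j = ?swap])
      (auto simp: resample_resample live_prob_resample[OF assms], auto simp: resample_def)
  also have "\<dots> = (\<Sum>L\<in>Pow E. \<Sum>L'\<in>Pow E. ?P L * ?P L' * f L)"
    by (rule sum.cartesian_product[symmetric])
  finally show ?thesis using sum_live_prob_pair_fst[OF assms] by simp
qed

lemma rtrancl_Un_out_edges_Image:
  "(L \<union> (L' \<inter> S \<times> UNIV))\<^sup>* `` S \<subseteq> L\<^sup>* `` S \<union> (resample (S \<times> UNIV) L L')\<^sup>* `` S"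
proof
  fix v assume "v \<in> (L \<union> (L' \<inter> S \<times> UNIV))\<^sup>* `` S"
  then obtain s where "s \<in> S" and path: "(s, v) \<in> (L \<union> (L' \<inter> S \<times> UNIV))\<^sup>*" by blast
  let ?O = "S \<times> UNIV"
  have "v \<in> S \<or> (\<exists>u\<in>S. \<exists>w. (u, w) \<in> L \<and> (w, v) \<in> (L - ?O)\<^sup>*)
      \<or> (\<exists>u\<in>S. \<exists>w. (u, w) \<in> L' \<and> (w, v) \<in> (L - ?O)\<^sup>*)"
    using path
  proof (induction rule: rtrancl_induct)
    case base
    then show ?case using \<open>s \<in> S\<close> by simp
  next
    case (step y z)
    then show ?case
      by (cases "y \<in> S") (auto intro: rtrancl_into_rtrancl)
  qed
  moreover have "(L - ?O)\<^sup>* \<subseteq> L\<^sup>*" and "(L - ?O)\<^sup>* \<subseteq> (resample ?O L L')\<^sup>*"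
    unfolding resample_def by (simp_all add: Diff_subset rtrancl_mono)
  moreover have "L' \<inter> ?O \<subseteq> resample ?O L L'"
    unfolding resample_def by blast
  ultimately show "v \<in> L\<^sup>* `` S \<union> (resample ?O L L')\<^sup>* `` S"
    by (blast intro: converse_rtrancl_into_rtrancl)
qed

lemma reach_count_eq_card_Image: "reach_count V L S = card (V \<inter> L\<^sup>* `` S)"
  unfolding reach_count_def by (rule arg_cong[where f = card]) auto

lemma reach_count_two_level_le:
  assumes "finite V" and "L' \<subseteq> E"
  shows "reach_count V (two_level E S L L') S
       \<le> reach_count V L S + reach_count V (resample (S \<times> UNIV) L L') S"
proof -
  let ?R = "resample (S \<times> UNIV) L L'"
  have "two_level E S L L' = L \<union> (L' \<inter> S \<times> UNIV)"
    using assms(2) unfolding two_level_def by auto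
  then have "V \<inter> (two_level E S L L')\<^sup>* `` S \<subseteq> (V \<inter> L\<^sup>* `` S) \<union> (V \<inter> ?R\<^sup>* `` S)"
    using rtrancl_Un_out_edges_Image[of L L' S] by (simp only:) blast
  then have "card (V \<inter> (two_level E S L L')\<^sup>* `` S) \<le> card ((V \<inter> L\<^sup>* `` S) \<union> (V \<inter> ?R\<^sup>* `` S))"
    by (rule card_mono[rotated]) (simp add: assms(1))
  also have "\<dots> \<le> card (V \<inter> L\<^sup>* `` S) + card (V \<inter> ?R\<^sup>* `` S)"
    by (rule card_Un_le)
  finally show ?thesis unfolding reach_count_eq_card_Image .
qed

theorem lemma7:
  fixes V :: "'a set" and E :: "('a \<times> 'a) set" and p :: "'a \<times> 'a \<Rightarrow> real" and S :: "'a set"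
  assumes "influence_graph V E p" and "S \<subseteq> V"
  shows "sigma2 V E p S \<le> 2 * sigma V E p S"
proof -
  have "finite V" and "E \<subseteq> V \<times> V" and p: "\<forall>e\<in>E. 0 \<le> p e \<and> p e \<le> 1"
    using assms(1) unfolding influence_graph_def by auto
  then have "finite E" using finite_cartesian_product finite_subset by blast
  let ?P = "live_prob E p"
  let ?f = "\<lambda>L. real (reach_count V L S)"
  let ?R = "resample (S \<times> UNIV)"
  have "sigma2 V E p S \<le> (\<Sum>L\<in>Pow E. \<Sum>L'\<in>Pow E. ?P L * ?P L' * (?f L + ?f (?R L L')))"
    unfolding sigma2_def
    using reach_count_two_level_le[OF \<open>finite V\<close>] live_prob_nonneg[OF p]
    by (intro sum_mono mult_left_mono) (auto simp flip: of_nat_add)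
  also have "\<dots> = (\<Sum>L\<in>Pow E. \<Sum>L'\<in>Pow E. ?P L * ?P L' * ?f L)
      + (\<Sum>L\<in>Pow E. \<Sum>L'\<in>Pow E. ?P L * ?P L' * ?f (?R L L'))"
    by (simp add: distrib_left sum.distrib)
  also have "\<dots> = 2 * sigma V E p S"
    unfolding sigma_def sum_live_prob_pair_fst[OF \<open>finite E\<close>]
      sum_live_prob_resample[OF \<open>finite E\<close>, where f = ?f] by simp
  finally show ?thesis .
qed

end
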